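(* Every maximal chain set $E\subseteq M$ is closed, and hence compact.
   Context: Hybrid system setup: $G$ is a finite directed graph with vertex set $V=\{1,\dots,n\}$ (loops allowed); $\Omega$ is the set of sequences $(x_i)_{i\in\mathbb Z}\in V^{\mathbb Z}$ with an edge from $x_i$ to $x_{i+1}$ for all $i$. Fix $h>0$. $\bar\Delta$ is the set of functions $x:\mathbb R\to V$ constant on each $[kh,(k+1)h)$, $k\in\mathbb Z$, with $(x(kh))_k\in\Omega$; $\Delta=\{x(\cdot+t):x\in\bar\Delta, t\in\mathbb R\}$ with metric $d(x,y)=\sum_{i\in\mathbb Z}4^{-|i|}\frac1h\int_{ih}^{(i+1)h}\delta(x,y,t)\,dt$ ($\delta=1$ if $x(t)\ne y(t)$, else $0$), and $\psi_t(f)=f(\cdot+t)$. $M$ is a compact metric space (e.g. a compact subset of $\mathbb R^d$) and $\phi_1,\dots,\phi_n$ are continuous flows on $M$, $\phi_i$ associated with vertex $i$. For $x\in M$, $f\in\Delta$, $\varphi(\cdot,x,f):\mathbb R\to M$ is the continuous curve with $\varphi(0,x,f)=x$ such that whenever $f\equiv i$ on an interval $I$, $\varphi(t,x,f)=\phi_i(t-s,\varphi(s,x,f))$ for all $s,t$ in the closure of $I$. A set $E\subseteq M$ is a chain set if (i) for every $x\in E$ there is $f\in\Delta$ with $\varphi(t,x,f)\in E$ for all $t\in\mathbb R$, and (ii) for all $x,y\in E$ and all $\varepsilon,T>0$ there are $k\in\mathbb N$, $x_0,\dots,x_k\in M$, $f_0,\dots,f_{k-1}\in\Delta$ and $t_0,\dots,t_{k-1}\ge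 T$ with $x_0=x$, $x_k=y$ and $d(\varphi(t_j,x_j,f_j),x_{j+1})\le\varepsilon$ for $j=0,\dots,k-1$ (an $(\varepsilon,T)$-chain from $x$ to $y$). A maximal chain set is a chain set not properly contained in another chain set. *)

theory Defs
  imports "HOL-Analysis.Analysis"
begin

text \<open>Graph G on vertex set {1..n}: edge relation Gr (a set of pairs, loops allowed).
  barDelta: piecewise-constant functions with steps on [kh,(k+1)h) whose sample
  sequence (x(kh))_k is an infinite path of G.\<close>
definition barDelta :: "nat \<Rightarrow> (nat \<times> nat) set \<Rightarrow> real \<Rightarrow> (real \<Rightarrow> nat) set" where
  "barDelta n Gr h = {x. (\<forall>k::int. \<forall>t. real_of_int k * h \<le> t \<and> t < (real_of_int k + 1) * h
                              \<longrightarrow> x t = x (real_of_int k * h))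
                       \<and> (\<forall>k::int. x (real_of_int k * h) \<in> {1..n}
                              \<and> (x (real_of_int k * h), x ((real_of_int k + 1) * h)) \<in> Gr)}"

definition Delta :: "nat \<Rightarrow> (nat \<times> nat) set \<Rightarrow> real \<Rightarrow> (real \<Rightarrow> nat) set" where
  "Delta n Gr h = {(\<lambda>s. x (s + t)) | x t. x \<in> barDelta n Gr h}"

definition cont_flow :: "'a::metric_space set \<Rightarrow> (real \<Rightarrow> 'a \<Rightarrow> 'a) \<Rightarrow> bool" where
  "cont_flow M \<psi> \<longleftrightarrow> (\<forall>x\<in>M. \<psi> 0 x = x) \<and> (\<forall>x\<in>M. \<forall>t. \<psi> t x \<in> M)
     \<and> (\<forall>x\<in>M. \<forall>s t. \<psi> (s + t) x = \<psi> s (\<psi> t x))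
     \<and> continuous_on (UNIV \<times> M) (\<lambda>(t, x). \<psi> t x)"

definition is_traj :: "(nat \<Rightarrow> real \<Rightarrow> 'a::metric_space \<Rightarrow> 'a) \<Rightarrow> (real \<Rightarrow> nat) \<Rightarrow> 'a \<Rightarrow> (real \<Rightarrow> 'a) \<Rightarrow> bool" where
  "is_traj phi f x \<gamma> \<longleftrightarrow> \<gamma> 0 = x \<and> continuous_on UNIV \<gamma>
     \<and> (\<forall>I i. is_interval (I :: real set) \<and> (\<forall>t\<in>I. f t = i) \<longrightarrow>
          (\<forall>s\<in>closure I. \<forall>t\<in>closure I. \<gamma> t = phi i (t - s) (\<gamma> s)))"

definition hphi :: "(nat \<Rightarrow> real \<Rightarrow> 'a::metric_space \<Rightarrow> 'a) \<Rightarrow> real \<Rightarrow> 'a \<Rightarrow> (real \<Rightarrow> nat) \<Rightarrow> 'a" where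
  "hphi phi t x f = (THE \<gamma>. is_traj phi f x \<gamma>) t"

definition chain_set ::
  "nat \<Rightarrow> (nat \<times> nat) set \<Rightarrow> real \<Rightarrow> 'a::metric_space set \<Rightarrow> (nat \<Rightarrow> real \<Rightarrow> 'a \<Rightarrow> 'a) \<Rightarrow> 'a set \<Rightarrow> bool" where
  "chain_set n Gr h M phi E \<longleftrightarrow> E \<subseteq> M
     \<and> (\<forall>x\<in>E. \<exists>f\<in>Delta n Gr h. \<forall>t. hphi phi t x f \<in> E)
     \<and> (\<forall>x\<in>E. \<forall>y\<in>E. \<forall>\<epsilon>>0. \<forall>T>0. \<exists>(k::nat) (xs::nat \<Rightarrow> 'a) (fs::nat \<Rightarrow> real \<Rightarrow> nat) (ts::nat \<Rightarrow> real).
          k \<ge> 1 \<and> xs 0 = x \<and> xs k = y \<and> (\<forall>j\<le>k. xs j \<in> M)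
          \<and> (\<forall>j<k. fs j \<in> Delta n Gr h \<and> ts j \<ge> T
                 \<and> dist (hphi phi (ts j) (xs j) (fs j)) (xs (Suc j)) \<le> \<epsilon>))"

definition maximal_chain_set ::
  "nat \<Rightarrow> (nat \<times> nat) set \<Rightarrow> real \<Rightarrow> 'a::metric_space set \<Rightarrow> (nat \<Rightarrow> real \<Rightarrow> 'a \<Rightarrow> 'a) \<Rightarrow> 'a set \<Rightarrow> bool" where
  "maximal_chain_set n Gr h M phi E \<longleftrightarrow> chain_set n Gr h M phi E
     \<and> (\<forall>E'. chain_set n Gr h M phi E' \<and> E \<subseteq> E' \<longrightarrow> E' = E)"

end

theory Submission
  imports Defs "HOL-Library.Diagonal_Subsequence" "HOL-Library.Nat_Bijection"
begin

text \<open>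
  The closure of a chain set is again a chain set, so a maximal chain set equals its closure.
  Chains pass to the closure by perturbing their end points; a chain out of a point x of the
  closure starts with a trajectory of x that stays in the closure.
  Invariance of the closure is the substantial part: a point of the closure is a limit of points
  of E with signals f_k keeping their trajectories in E. Each f_k is determined by a phase in
  [0, h] and a walk in the finite graph, so a diagonal subsequence has a converging phase and
  eventually constant walk entries; along it the trajectories converge pointwise, by continuity
  of the flows, to the trajectory of the limit signal, which therefore stays in the closure.
\<close>

abbreviation signal :: "real \<Rightarrow> real \<Rightarrow> (int \<Rightarrow> nat) \<Rightarrow> real \<Rightarrow> nat" where
  "signal h c v \<equiv> \<lambda>s. v \<lfloor>(s + c) / h\<rfloor>"

abbreviation biinfinite_walk :: "nat \<Rightarrow> (nat \<times> nat) set \<Rightarrow> (int \<Rightarrow> nat) \<Rightarrow> bool" where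
  "biinfinite_walk n Gr v \<equiv> \<forall>j. v j \<in> {1..n} \<and> (v j, v (j + 1)) \<in> Gr"

lemma signal_in_Delta:
  assumes v: "biinfinite_walk n Gr v" and h: "h > 0"
  shows "signal h c v \<in> Delta n Gr h"
proof -
  define x where "x = (\<lambda>r::real. v \<lfloor>r / h\<rfloor>)"
  have xk: "x (real_of_int k * h) = v k" for k
    using h by (simp add: x_def)
  have xk1: "x ((real_of_int k + 1) * h) = v (k + 1)" for k
  proof -
    have "((real_of_int k + 1) * h) / h = real_of_int (k + 1)" using h by simp
    then show ?thesis by (simp only: x_def floor_of_int)
  qed
  have "x \<in> barDelta n Gr h"
    unfolding barDelta_def
  proof (intro CollectI conjI allI impI)
    fix k :: int and t assume "real_of_int k * h \<le> t \<and> t < (real_of_int k + 1) * h"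
    then have "\<lfloor>t / h\<rfloor> = k" using h by (subst floor_eq_iff) (auto simp: field_simps)
    then show "x t = x (real_of_int k * h)" using h by (simp add: x_def)
  next
    fix k :: int
    show "x (real_of_int k * h) \<in> {1..n}" "(x (real_of_int k * h), x ((real_of_int k + 1) * h)) \<in> Gr"
      using v by (simp_all only: xk xk1)
  qed
  moreover have "signal h c v = (\<lambda>s. x (s + c))" by (simp add: x_def)
  ultimately show ?thesis unfolding Delta_def by blast
qed

lemma Delta_obtain_signal:
  assumes f: "f \<in> Delta n Gr h" and h: "h > 0"
  obtains c v where "0 \<le> c" "c < h" "biinfinite_walk n Gr v" "f = signal h c v"
proof -
  obtain x t where f: "f = (\<lambda>s. x (s + t))" and x: "x \<in> barDelta n Gr h"
    using f unfolding Delta_def by blast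
  have X1: "\<And>k t. real_of_int k * h \<le> t \<Longrightarrow> t < (real_of_int k + 1) * h \<Longrightarrow> x t = x (real_of_int k * h)"
   and X2: "\<And>k. x (real_of_int k * h) \<in> {1..n} \<and> (x (real_of_int k * h), x ((real_of_int k + 1) * h)) \<in> Gr"
    using x unfolding barDelta_def mem_Collect_eq by blast+
  define q where "q = \<lfloor>t / h\<rfloor>"
  define c where "c = t - real_of_int q * h"
  define v where "v = (\<lambda>j. x (real_of_int (j + q) * h))"
  have "0 \<le> c" "c < h"
    using floor_divide_lower[OF h, of t] floor_divide_upper[OF h, of t]
    by (auto simp: c_def q_def algebra_simps)
  moreover have "biinfinite_walk n Gr v"
  proof
    fix j
    have "v (j + 1) = x ((real_of_int (j + q) + 1) * h)" by (simp add: v_def algebra_simps)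
    then show "v j \<in> {1..n} \<and> (v j, v (j + 1)) \<in> Gr" using X2[of "j + q"] by (simp add: v_def)
  qed
  moreover have "f = signal h c v"
  proof
    fix s
    have "(s + t) / h = (s + c) / h + real_of_int q" using h by (simp add: c_def field_simps)
    then have "\<lfloor>(s + t) / h\<rfloor> = \<lfloor>(s + c) / h\<rfloor> + q" by simp
    moreover have "x (s + t) = x (real_of_int \<lfloor>(s + t) / h\<rfloor> * h)"
      by (rule X1) (use floor_divide_lower[OF h, of "s + t"] floor_divide_upper[OF h, of "s + t"] in auto)
    ultimately show "f s = signal h c v s" by (simp add: f v_def)
  qed
  ultimately show ?thesis using that by blast
qed

lemma cont_flow_zero: "cont_flow M \<psi> \<Longrightarrow> x \<in> M \<Longrightarrow> \<psi> 0 x = x"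
  by (simp add: cont_flow_def)

lemma cont_flow_in: "cont_flow M \<psi> \<Longrightarrow> x \<in> M \<Longrightarrow> \<psi> t x \<in> M"
  by (simp add: cont_flow_def)

lemma cont_flow_add: "cont_flow M \<psi> \<Longrightarrow> x \<in> M \<Longrightarrow> \<psi> (s + t) x = \<psi> s (\<psi> t x)"
  by (simp add: cont_flow_def)

lemma cont_flow_neg_cancel: "cont_flow M \<psi> \<Longrightarrow> x \<in> M \<Longrightarrow> \<psi> (-t) (\<psi> t x) = x"
  by (metis cont_flow_add cont_flow_zero add.left_inverse)

lemma cont_flow_cancel_neg: "cont_flow M \<psi> \<Longrightarrow> x \<in> M \<Longrightarrow> \<psi> t (\<psi> (-t) x) = x"
  by (metis cont_flow_neg_cancel minus_minus)

lemma continuous_on_cont_flow_time: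
  assumes "cont_flow M \<psi>" "x \<in> M"
  shows "continuous_on S (\<lambda>t. \<psi> (t - a) x)"
proof -
  have "continuous_on S (\<lambda>t. (\<lambda>(t, x). \<psi> t x) (t - a, x))"
    by (rule continuous_on_compose2[of "UNIV \<times> M"])
       (use assms in \<open>auto intro!: continuous_intros simp: cont_flow_def\<close>)
  then show ?thesis by simp
qed

lemma cont_flow_tendsto:
  assumes "cont_flow M \<psi>" and "ts \<longlonglongrightarrow> t" and "xs \<longlonglongrightarrow> x" and "\<forall>k. xs k \<in> M" and "x \<in> M"
  shows "(\<lambda>k. \<psi> (ts k) (xs k)) \<longlonglongrightarrow> \<psi> t x"
proof -
  have "(\<lambda>k. (\<lambda>(t, x). \<psi> t x) (ts k, xs k)) \<longlonglongrightarrow> (\<lambda>(t, x). \<psi> t x) (t, x)"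
    by (rule continuous_on_tendsto_compose[of "UNIV \<times> M"])
       (use assms in \<open>auto intro: tendsto_Pair simp: cont_flow_def\<close>)
  then show ?thesis by simp
qed

text \<open>
  The signal \<open>signal h c v\<close> switches at the instants \<open>m * h - c\<close>; \<open>switch_state \<dots> x m\<close> is the
  state at the instant \<open>m * h - c\<close> of the trajectory through x at time 0, obtained by flowing
  forward (m \<ge> 0) or backward (m < 0) cell by cell.
\<close>

primrec fwd_switch_state :: "(nat \<Rightarrow> real \<Rightarrow> 'a \<Rightarrow> 'a) \<Rightarrow> real \<Rightarrow> real \<Rightarrow> (int \<Rightarrow> nat) \<Rightarrow> 'a \<Rightarrow> nat \<Rightarrow> 'a" where
  "fwd_switch_state phi h c v x 0 = phi (v 0) (-c) x"
| "fwd_switch_state phi h c v x (Suc k) = phi (v (int k)) h (fwd_switch_state phi h c v x k)"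

primrec bwd_switch_state :: "(nat \<Rightarrow> real \<Rightarrow> 'a \<Rightarrow> 'a) \<Rightarrow> real \<Rightarrow> real \<Rightarrow> (int \<Rightarrow> nat) \<Rightarrow> 'a \<Rightarrow> nat \<Rightarrow> 'a" where
  "bwd_switch_state phi h c v x 0 = phi (v 0) (-c) x"
| "bwd_switch_state phi h c v x (Suc k) = phi (v (- int k - 1)) (-h) (bwd_switch_state phi h c v x k)"

definition switch_state :: "(nat \<Rightarrow> real \<Rightarrow> 'a \<Rightarrow> 'a) \<Rightarrow> real \<Rightarrow> real \<Rightarrow> (int \<Rightarrow> nat) \<Rightarrow> 'a \<Rightarrow> int \<Rightarrow> 'a" where
  "switch_state phi h c v x m =
     (if m \<ge> 0 then fwd_switch_state phi h c v x (nat m) else bwd_switch_state phi h c v x (nat (-m)))"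

definition switched_traj :: "(nat \<Rightarrow> real \<Rightarrow> 'a \<Rightarrow> 'a) \<Rightarrow> real \<Rightarrow> real \<Rightarrow> (int \<Rightarrow> nat) \<Rightarrow> 'a \<Rightarrow> real \<Rightarrow> 'a" where
  "switched_traj phi h c v x t =
     phi (v \<lfloor>(t + c) / h\<rfloor>) (t - (real_of_int \<lfloor>(t + c) / h\<rfloor> * h - c))
       (switch_state phi h c v x \<lfloor>(t + c) / h\<rfloor>)"

lemma is_interval_closure_between:
  fixes I :: "real set"
  assumes "is_interval I" "s \<in> closure I" "t \<in> closure I" "s < r" "r < t"
  shows "r \<in> I"
proof -
  obtain a where a: "a \<in> I" "dist a s < r - s"
    using assms(2,4) unfolding closure_approachable by (meson diff_gt_0_iff_gt)
  obtain b where b: "b \<in> I" "dist b t < t - r"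
    using assms(3,5) unfolding closure_approachable by (meson diff_gt_0_iff_gt)
  have "a \<le> r" "r \<le> b" using a b by (auto simp: dist_real_def)
  then show ?thesis using assms(1) a b unfolding is_interval_1 by blast
qed

locale switched_system =
  fixes M :: "'a::metric_space set" and phi :: "nat \<Rightarrow> real \<Rightarrow> 'a \<Rightarrow> 'a"
    and h c :: real and v :: "int \<Rightarrow> nat"
  assumes h_pos: "h > 0" and phase_nonneg: "0 \<le> c" and phase_le: "c \<le> h"
    and flows: "\<And>j. cont_flow M (phi (v j))"
begin

lemma switch_state_in: "x \<in> M \<Longrightarrow> switch_state phi h c v x m \<in> M"
proof -
  assume x: "x \<in> M"
  have "fwd_switch_state phi h c v x k \<in> M" for k
    by (induct k) (auto intro: cont_flow_in flows x)
  moreover have "bwd_switch_state phi h c v x k \<in> M" for k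
    by (induct k) (auto intro: cont_flow_in flows x)
  ultimately show ?thesis by (simp add: switch_state_def)
qed

lemma switch_state_succ:
  assumes x: "x \<in> M"
  shows "switch_state phi h c v x (m + 1) = phi (v m) h (switch_state phi h c v x m)"
proof (cases "m \<ge> 0")
  case True
  then have "nat (m + 1) = Suc (nat m)" by simp
  then show ?thesis using True by (simp add: switch_state_def)
next
  case False
  define k where "k = nat (-m-1)"
  have m: "m = - int k - 1" using False k_def by simp
  have prev: "switch_state phi h c v x m = phi (v m) (-h) (switch_state phi h c v x (m + 1))"
  proof (cases k)
    case 0 then show ?thesis by (simp add: switch_state_def m)
  next
    case (Suc j)
    then have "\<not> m + 1 \<ge> 0" "nat (- m) = Suc k" "nat (- (m + 1)) = k" by (simp_all add: m)
    then show ?thesis by (simp add: switch_state_def m)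
  qed
  show ?thesis
    unfolding prev by (rule cont_flow_cancel_neg[OF flows switch_state_in[OF x], symmetric])
qed

lemma switch_state_pred:
  "x \<in> M \<Longrightarrow> switch_state phi h c v x m = phi (v m) (-h) (switch_state phi h c v x (m + 1))"
  by (simp add: switch_state_succ cont_flow_neg_cancel[OF flows switch_state_in])

lemma floor_cell_eq:
  "real_of_int m * h - c \<le> t \<Longrightarrow> t < real_of_int m * h - c + h \<Longrightarrow> \<lfloor>(t + c) / h\<rfloor> = m"
  using h_pos by (subst floor_eq_iff) (auto simp: field_simps)

lemma floor_cell_bounds:
  "real_of_int \<lfloor>(t + c) / h\<rfloor> * h - c \<le> t" "t < real_of_int \<lfloor>(t + c) / h\<rfloor> * h - c + h"
  using floor_divide_lower[OF h_pos, of "t + c"] floor_divide_upper[OF h_pos, of "t + c"]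
  by (auto simp: algebra_simps)

text \<open>At the right end point of the cell the floor already selects the next cell.\<close>

lemma switched_traj_cell:
  assumes x: "x \<in> M" and "real_of_int m * h - c \<le> s" and "s \<le> real_of_int m * h - c + h"
  shows "switched_traj phi h c v x s = phi (v m) (s - (real_of_int m * h - c)) (switch_state phi h c v x m)"
proof (cases "s < real_of_int m * h - c + h")
  case True
  then show ?thesis using assms floor_cell_eq by (simp add: switched_traj_def)
next
  case False
  then have s: "s = real_of_int m * h - c + h" using assms by simp
  have "(s + c) / h = real_of_int (m + 1)" using h_pos by (simp add: s field_simps)
  then have "\<lfloor>(s + c) / h\<rfloor> = m + 1" by simp
  then show ?thesis
    using switch_state_succ[OF x, of m]
    by (simp add: switched_traj_def s cont_flow_zero[OF flows cont_flow_in[OF flows switch_state_in[OF x]]]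
        algebra_simps)
qed

lemma switched_traj_in: "x \<in> M \<Longrightarrow> switched_traj phi h c v x t \<in> M"
  by (simp add: switched_traj_def cont_flow_in[OF flows] switch_state_in)

lemma switched_traj_zero: "x \<in> M \<Longrightarrow> switched_traj phi h c v x 0 = x"
  using switched_traj_cell[of x 0 0] phase_nonneg phase_le
  by (simp add: switch_state_def cont_flow_cancel_neg[OF flows])

lemma continuous_switched_traj:
  assumes x: "x \<in> M"
  shows "continuous_on UNIV (switched_traj phi h c v x)"
proof (rule continuous_at_imp_continuous_on, intro ballI)
  fix t :: real
  let ?cell = "\<lambda>m. {real_of_int m * h - c .. real_of_int m * h - c + h}"
  define m where "m = \<lfloor>(t + c) / h\<rfloor>"
  have cell_cont: "continuous_on (?cell k) (switched_traj phi h c v x)" for k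
  proof (rule continuous_on_eq)
    show "continuous_on (?cell k)
        (\<lambda>t. phi (v k) (t - (real_of_int k * h - c)) (switch_state phi h c v x k))"
      by (rule continuous_on_cont_flow_time[OF flows switch_state_in[OF x]])
  qed (auto simp: switched_traj_cell[OF x])
  have "?cell (m - 1) \<union> ?cell m = {real_of_int m * h - c - h .. real_of_int m * h - c + h}"
    using h_pos by (auto simp: algebra_simps)
  then have "t \<in> interior (?cell (m - 1) \<union> ?cell m)"
    using floor_cell_bounds[of t] h_pos by (simp add: m_def)
  moreover have "continuous_on (?cell (m - 1) \<union> ?cell m) (switched_traj phi h c v x)"
    by (rule continuous_on_closed_Un[OF _ _ cell_cont cell_cont]) auto
  ultimately show "isCont (switched_traj phi h c v x) t"
    using continuous_on_interior by blast
qed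

lemma switched_traj_constant_segment:
  assumes x: "x \<in> M" and "s < t" and "\<forall>r. s < r \<and> r < t \<longrightarrow> v \<lfloor>(r + c) / h\<rfloor> = i"
  shows "switched_traj phi h c v x t = phi i (t - s) (switched_traj phi h c v x s)"
  using assms(2,3)
proof (induction "nat (\<lfloor>(t + c) / h\<rfloor> - \<lfloor>(s + c) / h\<rfloor>)" arbitrary: s rule: less_induct)
  case less
  note st = \<open>s < t\<close> and const = \<open>\<forall>r. s < r \<and> r < t \<longrightarrow> v \<lfloor>(r + c) / h\<rfloor> = i\<close>
  define m where "m = \<lfloor>(s + c) / h\<rfloor>"
  define b where "b = real_of_int m * h - c + h"
  have s1: "b - h \<le> s" and s2: "s < b" using floor_cell_bounds[of s] by (auto simp: b_def m_def)
  have i: "i = v m"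
  proof -
    define r where "r = (s + min t b) / 2"
    have r: "s < r" "r < t" "r < b" using st s2 by (auto simp: r_def)
    then have "\<lfloor>(r + c) / h\<rfloor> = m" using s1 by (intro floor_cell_eq) (auto simp: b_def)
    then show ?thesis using const r by force
  qed
  have flow_i: "cont_flow M (phi i)" using flows i by simp
  have first: "switched_traj phi h c v x t' = phi i (t' - s) (switched_traj phi h c v x s)"
    if "s \<le> t'" "t' \<le> b" for t'
  proof -
    have "switched_traj phi h c v x t' = phi (v m) ((t' - s) + (s - (b - h))) (switch_state phi h c v x m)"
      using switched_traj_cell[OF x, of m t'] s1 that by (simp add: b_def algebra_simps)
    also have "\<dots> = phi (v m) (t' - s) (phi (v m) (s - (b - h)) (switch_state phi h c v x m))"
      by (rule cont_flow_add[OF flows switch_state_in[OF x]])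
    also have "\<dots> = phi i (t' - s) (switched_traj phi h c v x s)"
      using switched_traj_cell[OF x, of m s] s1 s2 i by (simp add: b_def)
    finally show ?thesis .
  qed
  show ?case
  proof (cases "t \<le> b")
    case True
    then show ?thesis using st by (intro first) auto
  next
    case False
    have "\<lfloor>(b + c) / h\<rfloor> = m + 1"
      by (rule floor_cell_eq) (auto simp: b_def algebra_simps h_pos)
    moreover have "m + 1 \<le> \<lfloor>(t + c) / h\<rfloor>"
    proof -
      have "real_of_int (m + 1) * h \<le> t + c" using False by (simp add: b_def algebra_simps)
      then have "real_of_int (m + 1) \<le> (t + c) / h" using h_pos by (simp add: field_simps)
      then show ?thesis by (simp add: le_floor_iff)
    qed
    ultimately have "nat (\<lfloor>(t + c) / h\<rfloor> - \<lfloor>(b + c) / h\<rfloor>) < nat (\<lfloor>(t + c) / h\<rfloor> - \<lfloor>(s + c) / h\<rfloor>)"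
      by (simp add: m_def)
    then have "switched_traj phi h c v x t = phi i (t - b) (switched_traj phi h c v x b)"
      by (rule less.hyps) (use False const s2 in auto)
    also have "\<dots> = phi i (t - s) (switched_traj phi h c v x s)"
      using first[of b] s2 cont_flow_add[OF flow_i switched_traj_in[OF x], of "t - b" "b - s" s]
      by simp
    finally show ?thesis .
  qed
qed

lemma is_traj_switched_traj:
  assumes x: "x \<in> M"
  shows "is_traj phi (signal h c v) x (switched_traj phi h c v x)"
  unfolding is_traj_def
proof (intro conjI allI impI ballI)
  show "switched_traj phi h c v x 0 = x" by (rule switched_traj_zero[OF x])
  show "continuous_on UNIV (switched_traj phi h c v x)" by (rule continuous_switched_traj[OF x])
  fix I :: "real set" and i s t
  assume I: "is_interval I \<and> (\<forall>t\<in>I. v \<lfloor>(t + c) / h\<rfloor> = i)" and s: "s \<in> closure I" and t: "t \<in> closure I"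
  have "I \<noteq> {}" using s by auto
  then obtain r where "r \<in> I" by blast
  then have flow_i: "cont_flow M (phi i)" using I flows by metis
  have segment: "switched_traj phi h c v x b = phi i (b - a) (switched_traj phi h c v x a)"
    if "a < b" "a \<in> closure I" "b \<in> closure I" for a b
    using that I is_interval_closure_between[of I a b]
    by (intro switched_traj_constant_segment[OF x]) auto
  consider "s < t" | "s = t" | "t < s" by linarith
  then show "switched_traj phi h c v x t = phi i (t - s) (switched_traj phi h c v x s)"
  proof cases
    case 1
    then show ?thesis using segment s t by blast
  next
    case 2
    then show ?thesis using cont_flow_zero[OF flow_i switched_traj_in[OF x]] by simp
  next
    case 3
    then have "switched_traj phi h c v x s = phi i (s - t) (switched_traj phi h c v x t)"
      using segment s t by blast
    then show ?thesis using cont_flow_cancel_neg[OF flow_i switched_traj_in[OF x], of "t - s"] by simp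
  qed
qed

lemma is_traj_unique:
  assumes x: "x \<in> M" and \<gamma>: "is_traj phi (signal h c v) x \<gamma>"
  shows "\<gamma> = switched_traj phi h c v x"
proof -
  have cell: "\<gamma> t = phi (v m) (t - s) (\<gamma> s)"
    if "s \<in> {real_of_int m * h - c .. real_of_int m * h - c + h}"
      "t \<in> {real_of_int m * h - c .. real_of_int m * h - c + h}" for m s t
  proof -
    let ?I = "{real_of_int m * h - c ..< real_of_int m * h - c + h}"
    have "is_interval ?I" by (simp add: is_interval_ic)
    moreover have "\<forall>t\<in>?I. v \<lfloor>(t + c) / h\<rfloor> = v m" using floor_cell_eq by auto
    moreover have "closure ?I = {real_of_int m * h - c .. real_of_int m * h - c + h}"
      using h_pos by simp
    ultimately show ?thesis using \<gamma> that unfolding is_traj_def by metis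
  qed
  have switch: "\<gamma> (real_of_int m * h - c) = switch_state phi h c v x m" for m
  proof (induction m rule: int_induct[where k = 0])
    case base
    have "\<gamma> (real_of_int 0 * h - c) = phi (v 0) (real_of_int 0 * h - c - 0) (\<gamma> 0)"
      by (rule cell) (use phase_nonneg phase_le in auto)
    then show ?case using \<gamma> by (simp add: is_traj_def switch_state_def)
  next
    case (step1 i)
    have "\<gamma> (real_of_int (i + 1) * h - c)
        = phi (v i) (real_of_int (i + 1) * h - c - (real_of_int i * h - c)) (\<gamma> (real_of_int i * h - c))"
      by (rule cell) (use h_pos in \<open>auto simp: algebra_simps\<close>)
    then show ?case using step1 switch_state_succ[OF x, of i] by (simp add: algebra_simps)
  next
    case (step2 i)
    have "\<gamma> (real_of_int (i - 1) * h - c)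
        = phi (v (i - 1)) (real_of_int (i - 1) * h - c - (real_of_int i * h - c)) (\<gamma> (real_of_int i * h - c))"
      by (rule cell) (use h_pos in \<open>auto simp: algebra_simps\<close>)
    then show ?case using step2 switch_state_pred[OF x, of "i - 1"] by (simp add: algebra_simps)
  qed
  show ?thesis
  proof
    fix t
    define m where "m = \<lfloor>(t + c) / h\<rfloor>"
    have "\<gamma> t = phi (v m) (t - (real_of_int m * h - c)) (\<gamma> (real_of_int m * h - c))"
      by (rule cell) (use floor_cell_bounds[of t] h_pos in \<open>auto simp: m_def\<close>)
    then show "\<gamma> t = switched_traj phi h c v x t" by (simp add: switch switched_traj_def m_def)
  qed
qed

lemma hphi_signal:
  "x \<in> M \<Longrightarrow> hphi phi t x (signal h c v) = switched_traj phi h c v x t"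
  unfolding hphi_def using is_traj_switched_traj is_traj_unique by (metis the_equality)

end

lemma tendsto_eventually_either:
  fixes X A B :: "nat \<Rightarrow> 'a::metric_space"
  assumes "A \<longlonglongrightarrow> L" and "B \<longlonglongrightarrow> L" and "eventually (\<lambda>k. X k = A k \<or> X k = B k) sequentially"
  shows "X \<longlonglongrightarrow> L"
proof (rule tendstoI)
  fix e :: real assume e: "e > 0"
  show "eventually (\<lambda>k. dist (X k) L < e) sequentially"
    using tendstoD[OF assms(1) e] tendstoD[OF assms(2) e] assms(3) by eventually_elim auto
qed

locale converging_switched_systems =
  fixes M :: "'a::metric_space set" and phi :: "nat \<Rightarrow> real \<Rightarrow> 'a \<Rightarrow> 'a" and h :: real
    and cs :: "nat \<Rightarrow> real" and vs :: "nat \<Rightarrow> int \<Rightarrow> nat" and c :: real and v :: "int \<Rightarrow> nat"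
  assumes systems: "\<And>k. switched_system M phi h (cs k) (vs k)"
    and limit: "switched_system M phi h c v"
    and phase_tendsto: "cs \<longlonglongrightarrow> c"
    and walk_eventually: "\<And>j. eventually (\<lambda>k. vs k j = v j) sequentially"
begin

interpretation L: switched_system M phi h c v by (rule limit)

lemma switch_state_tendsto:
  assumes ys: "\<forall>k. ys k \<in> M" "ys \<longlonglongrightarrow> y" and y: "y \<in> M"
  shows "(\<lambda>k. switch_state phi h (cs k) (vs k) (ys k) m) \<longlonglongrightarrow> switch_state phi h c v y m"
proof (induction m rule: int_induct[where k = 0])
  case base
  have "(\<lambda>k. phi (v 0) (- cs k) (ys k)) \<longlonglongrightarrow> phi (v 0) (- c) y"
    by (rule cont_flow_tendsto[OF L.flows]) (use phase_tendsto ys y in \<open>auto intro: tendsto_intros\<close>)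
  moreover have "eventually (\<lambda>k. phi (v 0) (- cs k) (ys k) = switch_state phi h (cs k) (vs k) (ys k) 0) sequentially"
    using walk_eventually[of 0] by eventually_elim (simp add: switch_state_def)
  ultimately show ?case by (simp add: switch_state_def Lim_transform_eventually)
next
  case (step1 i)
  have "(\<lambda>k. phi (v i) h (switch_state phi h (cs k) (vs k) (ys k) i)) \<longlonglongrightarrow> phi (v i) h (switch_state phi h c v y i)"
    by (rule cont_flow_tendsto[OF L.flows tendsto_const step1(2)])
       (use ys y switched_system.switch_state_in[OF systems] L.switch_state_in in auto)
  moreover have "eventually (\<lambda>k. phi (v i) h (switch_state phi h (cs k) (vs k) (ys k) i)
      = switch_state phi h (cs k) (vs k) (ys k) (i + 1)) sequentially"
    using walk_eventually[of i]
    by eventually_elim (simp add: switched_system.switch_state_succ[OF systems] ys)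
  ultimately show ?case by (simp add: L.switch_state_succ[OF y] Lim_transform_eventually)
next
  case (step2 i)
  have "(\<lambda>k. phi (v (i - 1)) (-h) (switch_state phi h (cs k) (vs k) (ys k) i))
      \<longlonglongrightarrow> phi (v (i - 1)) (-h) (switch_state phi h c v y i)"
    by (rule cont_flow_tendsto[OF L.flows tendsto_const step2(2)])
       (use ys y switched_system.switch_state_in[OF systems] L.switch_state_in in auto)
  moreover have "eventually (\<lambda>k. phi (v (i - 1)) (-h) (switch_state phi h (cs k) (vs k) (ys k) i)
      = switch_state phi h (cs k) (vs k) (ys k) (i - 1)) sequentially"
    using walk_eventually[of "i - 1"]
    by eventually_elim (simp add: switched_system.switch_state_pred[OF systems, where m = "i - 1"] ys)
  ultimately show ?case by (simp add: L.switch_state_pred[OF y, of "i - 1"] Lim_transform_eventually)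
qed

lemma cell_flow_tendsto:
  assumes ys: "\<forall>k. ys k \<in> M" "ys \<longlonglongrightarrow> y" and y: "y \<in> M"
  shows "(\<lambda>k. phi (v m) (t - (real_of_int m * h - cs k)) (switch_state phi h (cs k) (vs k) (ys k) m))
    \<longlonglongrightarrow> phi (v m) (t - (real_of_int m * h - c)) (switch_state phi h c v y m)"
  by (rule cont_flow_tendsto[OF L.flows tendsto_diff[OF tendsto_const tendsto_diff[OF tendsto_const phase_tendsto]]
        switch_state_tendsto[OF ys y]])
     (use ys switched_system.switch_state_in[OF systems] L.switch_state_in[OF y] in auto)

lemma switched_traj_eventually_cell:
  assumes ys: "\<forall>k. ys k \<in> M" and t: "real_of_int m * h - c < t" "t < real_of_int m * h - c + h"
  shows "eventually (\<lambda>k. switched_traj phi h (cs k) (vs k) (ys k) t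
    = phi (v m) (t - (real_of_int m * h - cs k)) (switch_state phi h (cs k) (vs k) (ys k) m)) sequentially"
proof -
  define d where "d = min (t - (real_of_int m * h - c)) (real_of_int m * h - c + h - t)"
  have "d > 0" using t by (simp add: d_def)
  with phase_tendsto have "eventually (\<lambda>k. dist (cs k) c < d) sequentially" by (rule tendstoD)
  then show ?thesis
    using walk_eventually[of m] proof eventually_elim
    case (elim k)
    then show ?case
      using switched_system.switched_traj_cell[OF systems ys[rule_format, of k], where m = m and s = t]
      by (auto simp: dist_real_def d_def abs_less_iff)
  qed
qed

text \<open>
  At a switching instant of the limit signal the approximating signals may switch just before or
  just after t, so t is eventually in one of two neighbouring cells.
\<close>

lemma switched_traj_eventually_adjacent_cells:
  assumes ys: "\<forall>k. ys k \<in> M" and t: "t = real_of_int m * h - c"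
  shows "eventually (\<lambda>k.
      switched_traj phi h (cs k) (vs k) (ys k) t
        = phi (v m) (t - (real_of_int m * h - cs k)) (switch_state phi h (cs k) (vs k) (ys k) m) \<or>
      switched_traj phi h (cs k) (vs k) (ys k) t
        = phi (v (m - 1)) (t - (real_of_int (m - 1) * h - cs k)) (switch_state phi h (cs k) (vs k) (ys k) (m - 1)))
    sequentially"
  using walk_eventually[of m] walk_eventually[of "m - 1"]
proof eventually_elim
  case (elim k)
  interpret K: switched_system M phi h "cs k" "vs k" by (rule systems)
  show ?case
  proof (cases "c \<le> cs k")
    case True
    then have "real_of_int m * h - cs k \<le> t" "t \<le> real_of_int m * h - cs k + h"
      using K.phase_le L.phase_nonneg t by auto
    then show ?thesis using K.switched_traj_cell[OF ys[rule_format, of k], of m t] elim by simp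
  next
    case False
    then have "real_of_int (m - 1) * h - cs k \<le> t" "t \<le> real_of_int (m - 1) * h - cs k + h"
      using K.phase_nonneg L.phase_le t by (auto simp: algebra_simps)
    then show ?thesis using K.switched_traj_cell[OF ys[rule_format, of k], of "m - 1" t] elim by simp
  qed
qed

lemma switched_traj_tendsto:
  assumes ys: "\<forall>k. ys k \<in> M" "ys \<longlonglongrightarrow> y" and y: "y \<in> M"
  shows "(\<lambda>k. switched_traj phi h (cs k) (vs k) (ys k) t) \<longlonglongrightarrow> switched_traj phi h c v y t"
proof -
  define m where "m = \<lfloor>(t + c) / h\<rfloor>"
  have t: "real_of_int m * h - c \<le> t" "t < real_of_int m * h - c + h"
    using L.floor_cell_bounds[of t] by (auto simp: m_def)
  have A: "(\<lambda>k. phi (v m) (t - (real_of_int m * h - cs k)) (switch_state phi h (cs k) (vs k) (ys k) m))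
      \<longlonglongrightarrow> switched_traj phi h c v y t"
    using cell_flow_tendsto[OF ys y, of m t] L.switched_traj_cell[OF y, of m t] t by simp
  show ?thesis
  proof (cases "real_of_int m * h - c < t")
    case True
    then show ?thesis
      using Lim_transform_eventually[OF A eventually_mono[OF switched_traj_eventually_cell[OF ys(1) True t(2)] sym]]
      by simp
  next
    case False
    then have t_switch: "t = real_of_int m * h - c" using t by simp
    have "switched_traj phi h c v y t
        = phi (v (m - 1)) (t - (real_of_int (m - 1) * h - c)) (switch_state phi h c v y (m - 1))"
      by (rule L.switched_traj_cell[OF y]) (use t_switch L.h_pos in \<open>auto simp: algebra_simps\<close>)
    then have B: "(\<lambda>k. phi (v (m - 1)) (t - (real_of_int (m - 1) * h - cs k))
        (switch_state phi h (cs k) (vs k) (ys k) (m - 1))) \<longlonglongrightarrow> switched_traj phi h c v y t"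
      using cell_flow_tendsto[OF ys y, of "m - 1" t] by simp
    show ?thesis
      by (rule tendsto_eventually_either[OF A B switched_traj_eventually_adjacent_cells[OF ys(1) t_switch]])
  qed
qed

end

lemma switched_system_walk:
  assumes "h > 0" "c \<in> {0..h}" "biinfinite_walk n Gr v" "\<forall>i\<in>{1..n}. cont_flow M (phi i)"
  shows "switched_system M phi h c v"
  using assms by unfold_locales auto

lemma walk_phase_subsequence:
  fixes cs :: "nat \<Rightarrow> real" and vs :: "nat \<Rightarrow> int \<Rightarrow> nat"
  assumes cs: "\<forall>k. cs k \<in> {0..h}" and vs: "\<forall>k. biinfinite_walk n Gr (vs k)"
  obtains \<sigma> c v where "strict_mono \<sigma>" "c \<in> {0..h}" "(\<lambda>i. cs (\<sigma> i)) \<longlonglongrightarrow> c"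
    "biinfinite_walk n Gr v" "\<And>j. eventually (\<lambda>i. vs (\<sigma> i) j = v j) sequentially"
proof -
  obtain c r where c: "c \<in> {0..h}" and r: "strict_mono r" and cr: "(cs \<circ> r) \<longlonglongrightarrow> c"
    using compact_imp_seq_compact[OF compact_Icc[of 0 h]] cs unfolding seq_compact_def by meson
  text \<open>Enumerate the walk positions by \<open>int_decode\<close> and make each of them constant in turn.\<close>
  interpret S: subseqs "\<lambda>q s. \<exists>L. \<forall>i. vs (r (s i)) (int_decode q) = L"
  proof
    fix q and s :: "nat \<Rightarrow> nat"
    assume "strict_mono s"
    define a where "a = (\<lambda>i. vs (r (s i)) (int_decode q))"
    have "finite (range a)" by (rule finite_subset[of _ "{1..n}"]) (use vs in \<open>auto simp: a_def\<close>)
    then obtain y where "infinite (a -` {y})" using inf_img_fin_dom[of a UNIV] by auto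
    then obtain r' :: "nat \<Rightarrow> nat" where "strict_mono r'" "\<forall>i. r' i \<in> a -` {y}"
      using infinite_enumerate by blast
    moreover from this(2) have "\<forall>i. vs (r ((s \<circ> r') i)) (int_decode q) = y" by (simp add: a_def)
    ultimately show "\<exists>r' :: nat \<Rightarrow> nat. strict_mono r' \<and> (\<exists>L. \<forall>i. vs (r ((s \<circ> r') i)) (int_decode q) = L)"
      by blast
  qed
  define \<sigma> where "\<sigma> = r \<circ> S.diagseq"
  define v where "v = (\<lambda>j. vs (\<sigma> (Suc (int_encode j))) j)"
  have \<sigma>: "strict_mono \<sigma>" unfolding \<sigma>_def using r S.subseq_diagseq by (rule strict_mono_o)
  have v: "eventually (\<lambda>i. vs (\<sigma> i) j = v j) sequentially" for j
  proof -
    have "\<exists>L. \<forall>i. vs (r ((S.diagseq \<circ> (+) (Suc (int_encode j))) i)) (int_decode (int_encode j)) = L"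
      by (rule S.diagseq_holds) (auto simp: o_def)
    then obtain L where L: "\<forall>i. vs (\<sigma> (Suc (int_encode j) + i)) j = L"
      by (auto simp: \<sigma>_def int_encode_inverse)
    then have "v j = L" using L[rule_format, of 0] by (simp add: v_def)
    then show ?thesis unfolding eventually_sequentially
      using L by (metis le_add_diff_inverse)
  qed
  have "biinfinite_walk n Gr v"
  proof
    fix j
    obtain i where "vs (\<sigma> i) j = v j" "vs (\<sigma> i) (j + 1) = v (j + 1)"
      using eventually_happens'[OF _ eventually_conj[OF v v]] by auto
    then show "v j \<in> {1..n} \<and> (v j, v (j + 1)) \<in> Gr" using vs by metis
  qed
  moreover have "(\<lambda>i. cs (\<sigma> i)) \<longlonglongrightarrow> c"
    using LIMSEQ_subseq_LIMSEQ[OF cr S.subseq_diagseq] by (simp add: \<sigma>_def o_def)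
  ultimately show ?thesis using that \<sigma> c v by blast
qed

lemma Delta_choice_signals:
  assumes h: "h > 0" and choice: "\<forall>k. \<exists>f\<in>Delta n Gr h. P k f"
  obtains cs vs where "\<forall>k. cs k \<in> {0..h}" "\<forall>k. biinfinite_walk n Gr (vs k)"
    "\<forall>k. P k (signal h (cs k) (vs k))"
proof -
  define Q where "Q k p \<longleftrightarrow> fst p \<in> {0..h} \<and> biinfinite_walk n Gr (snd p) \<and> P k (signal h (fst p) (snd p))"
    for k p
  have "\<exists>p. Q k p" for k
  proof -
    obtain f where f: "f \<in> Delta n Gr h" "P k f" using choice by blast
    obtain c v where "0 \<le> c" "c < h" "biinfinite_walk n Gr v" "f = signal h c v"
      using Delta_obtain_signal[OF f(1) h] .
    then show ?thesis using f(2) by (intro exI[of _ "(c, v)"]) (auto simp: Q_def)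
  qed
  then obtain p where "\<forall>k. Q k (p k)" using choice_iff by blast
  then show ?thesis using that[of "\<lambda>k. fst (p k)" "\<lambda>k. snd (p k)"] by (auto simp: Q_def)
qed

lemma closure_invariant:
  fixes M :: "'a::metric_space set"
  assumes h: "h > 0" and M: "closed M" and flows: "\<forall>i\<in>{1..n}. cont_flow M (phi i)" and EM: "E \<subseteq> M"
    and inv: "\<forall>x\<in>E. \<exists>f\<in>Delta n Gr h. \<forall>t. hphi phi t x f \<in> E" and x: "x \<in> closure E"
  shows "\<exists>f\<in>Delta n Gr h. \<forall>t. hphi phi t x f \<in> closure E"
proof -
  have xM: "x \<in> M" using x closure_minimal[OF EM M] by blast
  obtain es where es: "\<forall>k. es k \<in> E" "es \<longlonglongrightarrow> x" using x unfolding closure_sequential by blast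
  have "\<forall>k. \<exists>f\<in>Delta n Gr h. \<forall>t. hphi phi t (es k) f \<in> E" using inv es(1) by blast
  then obtain cs vs where cs: "\<forall>k. cs k \<in> {0..h}" and vs: "\<forall>k. biinfinite_walk n Gr (vs k)"
    and traj_E: "\<forall>k. \<forall>t. hphi phi t (es k) (signal h (cs k) (vs k)) \<in> E"
    by (rule Delta_choice_signals[OF h])
  obtain \<sigma> c v where \<sigma>: "strict_mono \<sigma>" and c: "c \<in> {0..h}" "(\<lambda>i. cs (\<sigma> i)) \<longlonglongrightarrow> c"
    and v: "biinfinite_walk n Gr v" "\<And>j. eventually (\<lambda>i. vs (\<sigma> i) j = v j) sequentially"
    using walk_phase_subsequence[OF cs vs] by blast
  have systems: "switched_system M phi h (cs k) (vs k)" for k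
    using switched_system_walk h cs vs flows by blast
  interpret converging_switched_systems M phi h "\<lambda>i. cs (\<sigma> i)" "\<lambda>i. vs (\<sigma> i)" c v
    by (rule converging_switched_systems.intro[OF systems switched_system_walk[OF h c(1) v(1) flows] c(2) v(2)])
  show ?thesis
  proof (intro bexI allI)
    show "signal h c v \<in> Delta n Gr h" by (rule signal_in_Delta[OF v(1) h])
    fix t
    have "(\<lambda>i. switched_traj phi h (cs (\<sigma> i)) (vs (\<sigma> i)) (es (\<sigma> i)) t) \<longlonglongrightarrow> switched_traj phi h c v x t"
      using switched_traj_tendsto[of "\<lambda>i. es (\<sigma> i)" x] LIMSEQ_subseq_LIMSEQ[OF es(2) \<sigma>] es(1) EM xM
      by (auto simp: o_def)
    moreover have "switched_traj phi h (cs (\<sigma> i)) (vs (\<sigma> i)) (es (\<sigma> i)) t \<in> E" for i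
      using traj_E switched_system.hphi_signal[OF systems] es(1) EM by (metis subsetD)
    ultimately have "switched_traj phi h c v x t \<in> closure E"
      unfolding closure_sequential
      by (intro exI[of _ "\<lambda>i. switched_traj phi h (cs (\<sigma> i)) (vs (\<sigma> i)) (es (\<sigma> i)) t"]) simp
    then show "hphi phi t x (signal h c v) \<in> closure E"
      by (simp add: switched_system.hphi_signal[OF switched_system_walk[OF h c(1) v(1) flows] xM])
  qed
qed

definition approx_chain ::
  "nat \<Rightarrow> (nat \<times> nat) set \<Rightarrow> real \<Rightarrow> 'a::metric_space set \<Rightarrow> (nat \<Rightarrow> real \<Rightarrow> 'a \<Rightarrow> 'a) \<Rightarrow> real \<Rightarrow> real \<Rightarrow> 'a \<Rightarrow> 'a \<Rightarrow> bool"
  where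
  "approx_chain n Gr h M phi \<epsilon> T x y \<longleftrightarrow>
     (\<exists>(k::nat) (xs::nat \<Rightarrow> 'a) (fs::nat \<Rightarrow> real \<Rightarrow> nat) (ts::nat \<Rightarrow> real).
        k \<ge> 1 \<and> xs 0 = x \<and> xs k = y \<and> (\<forall>j\<le>k. xs j \<in> M)
        \<and> (\<forall>j<k. fs j \<in> Delta n Gr h \<and> ts j \<ge> T
               \<and> dist (hphi phi (ts j) (xs j) (fs j)) (xs (Suc j)) \<le> \<epsilon>))"

lemma chain_set_iff_approx_chain:
  "chain_set n Gr h M phi E \<longleftrightarrow> E \<subseteq> M
     \<and> (\<forall>x\<in>E. \<exists>f\<in>Delta n Gr h. \<forall>t. hphi phi t x f \<in> E)
     \<and> (\<forall>x\<in>E. \<forall>y\<in>E. \<forall>\<epsilon>>0. \<forall>T>0. approx_chain n Gr h M phi \<epsilon> T x y)"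
  by (simp add: chain_set_def approx_chain_def)

lemma approx_chain_Cons:
  assumes "x \<in> M" "f \<in> Delta n Gr h" "T \<le> t" "dist (hphi phi t x f) z \<le> \<epsilon>"
    and "approx_chain n Gr h M phi \<epsilon> T z y"
  shows "approx_chain n Gr h M phi \<epsilon> T x y"
proof -
  obtain k xs fs ts where chain: "k \<ge> 1" "xs 0 = z" "xs k = y" "\<forall>j\<le>k. xs j \<in> M"
    "\<forall>j<k. fs j \<in> Delta n Gr h \<and> ts j \<ge> T \<and> dist (hphi phi (ts j) (xs j) (fs j)) (xs (Suc j)) \<le> \<epsilon>"
    using assms(5) unfolding approx_chain_def by blast
  show ?thesis
    unfolding approx_chain_def
  proof (intro exI[of _ "Suc k"] exI[of _ "case_nat x xs"] exI[of _ "case_nat f fs"]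
      exI[of _ "case_nat t ts"] conjI allI impI)
    fix j assume "j \<le> Suc k"
    then show "case_nat x xs j \<in> M" using assms(1) chain(4) by (cases j) auto
  next
    fix j assume "j < Suc k"
    then show "case_nat f fs j \<in> Delta n Gr h" "T \<le> case_nat t ts j"
      "dist (hphi phi (case_nat t ts j) (case_nat x xs j) (case_nat f fs j)) (case_nat x xs (Suc j)) \<le> \<epsilon>"
      using assms(2-4) chain(2,5) by (cases j; simp)+
  qed (use chain(1,3) in simp_all)
qed

lemma approx_chain_move_end:
  assumes "approx_chain n Gr h M phi \<epsilon> T x y'" "dist y' y \<le> \<delta>" "y \<in> M"
  shows "approx_chain n Gr h M phi (\<epsilon> + \<delta>) T x y"
proof -
  obtain k xs fs ts where chain: "k \<ge> 1" "xs 0 = x" "xs k = y'" "\<forall>j\<le>k. xs j \<in> M"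
    "\<forall>j<k. fs j \<in> Delta n Gr h \<and> ts j \<ge> T \<and> dist (hphi phi (ts j) (xs j) (fs j)) (xs (Suc j)) \<le> \<epsilon>"
    using assms(1) unfolding approx_chain_def by blast
  have "0 \<le> \<delta>" using assms(2) zero_le_dist order_trans by blast
  have step: "dist (hphi phi (ts j) (xs j) (fs j)) ((xs(k := y)) (Suc j)) \<le> \<epsilon> + \<delta>" if "j < k" for j
  proof (cases "Suc j = k")
    case True
    have "dist (hphi phi (ts j) (xs j) (fs j)) y \<le> dist (hphi phi (ts j) (xs j) (fs j)) y' + dist y' y"
      by (rule dist_triangle)
    then show ?thesis using True chain(3,5) that assms(2) by fastforce
  next
    case False
    then show ?thesis using chain(5) that \<open>0 \<le> \<delta>\<close> by fastforce
  qed
  show ?thesis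
    unfolding approx_chain_def
    by (intro exI[of _ k] exI[of _ "xs(k := y)"] exI[of _ fs] exI[of _ ts])
       (use chain step assms(3) in auto)
qed

lemma chain_set_closure:
  assumes h: "h > 0" and M: "closed M" and flows: "\<forall>i\<in>{1..n}. cont_flow M (phi i)"
    and E: "chain_set n Gr h M phi E"
  shows "chain_set n Gr h M phi (closure E)"
  unfolding chain_set_iff_approx_chain
proof (intro conjI ballI allI impI)
  have EM: "E \<subseteq> M" and inv: "\<forall>x\<in>E. \<exists>f\<in>Delta n Gr h. \<forall>t. hphi phi t x f \<in> E"
    and chains: "\<forall>x\<in>E. \<forall>y\<in>E. \<forall>\<epsilon>>0. \<forall>T>0. approx_chain n Gr h M phi \<epsilon> T x y"
    using E unfolding chain_set_iff_approx_chain by auto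
  show CM: "closure E \<subseteq> M" using closure_minimal[OF EM M] .
  show inv_closure: "\<exists>f\<in>Delta n Gr h. \<forall>t. hphi phi t x f \<in> closure E" if "x \<in> closure E" for x
    using closure_invariant[OF h M flows EM inv that] .
  fix x y and \<epsilon> T :: real
  assume x: "x \<in> closure E" and y: "y \<in> closure E" and "\<epsilon> > 0" "T > 0"
  then have e2: "\<epsilon> / 2 > 0" by simp
  obtain f where f: "f \<in> Delta n Gr h" "\<forall>t. hphi phi t x f \<in> closure E" using inv_closure[OF x] by blast
  obtain z where z: "z \<in> E" "dist z (hphi phi T x f) < \<epsilon> / 2"
    using f(2) e2 unfolding closure_approachable by blast
  obtain y' where y': "y' \<in> E" "dist y' y < \<epsilon> / 2"
    using y e2 unfolding closure_approachable by blast
  have "approx_chain n Gr h M phi (\<epsilon> / 2 + \<epsilon> / 2) T z y"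
    using chains z(1) y' y CM e2 \<open>T > 0\<close> by (intro approx_chain_move_end[of _ _ _ _ _ _ _ _ y']) auto
  moreover have "dist (hphi phi T x f) z \<le> \<epsilon>"
    using z(2) zero_le_dist[of z "hphi phi T x f"] dist_commute[of z "hphi phi T x f"] by linarith
  ultimately show "approx_chain n Gr h M phi \<epsilon> T x y"
    using x CM f(1) by (intro approx_chain_Cons[of x M f n Gr h T T]) auto
qed

theorem mainTheorem15:
  fixes n :: nat and Gr :: "(nat \<times> nat) set" and h :: real
    and M :: "'a::metric_space set" and phi :: "nat \<Rightarrow> real \<Rightarrow> 'a \<Rightarrow> 'a" and E :: "'a set"
  assumes "Gr \<subseteq> {1..n} \<times> {1..n}"
    and "h > 0"
    and "compact M"
    and "\<forall>i\<in>{1..n}. cont_flow M (phi i)"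
    and "maximal_chain_set n Gr h M phi E"
  shows "closed E \<and> compact E"
proof -
  have E: "chain_set n Gr h M phi E"
    and maximal: "\<And>E'. chain_set n Gr h M phi E' \<Longrightarrow> E \<subseteq> E' \<Longrightarrow> E' = E"
    using assms(5) unfolding maximal_chain_set_def by auto
  have "chain_set n Gr h M phi (closure E)"
    using chain_set_closure[OF assms(2) compact_imp_closed[OF assms(3)] assms(4) E] .
  then have "closure E = E" using maximal closure_subset by blast
  then have "closed E" by (metis closed_closure)
  moreover have "E \<subseteq> M" using E by (simp add: chain_set_def)
  ultimately show ?thesis using compact_Int_closed[OF assms(3)] by (metis inf.absorb_iff2)
qed

end
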